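(* For any $\tilde c>0$ and $N\in\mathbb N$, there exists $\eta\ge0$ such that $$\mathbb{E}\Big[\exp\Big(\tilde c\int_0^T\big(\|\mathbb{O}^{N,\eta}_t\|_{L^\infty}^2+1\big)\,dt\Big)\Big]<\infty,$$ where $\mathbb{O}^{N,\eta}_t:=\int_0^t e^{-(t-s)(A_N+\eta)}P_N\,dB^H(s)=\sum_{k=1}^N\Big(\int_0^te^{-(\lambda_k+\eta)(t-s)}dw_k^H(s)\Big)\phi_k$.
   Context: Let $\mathcal D=(0,1)$, $U=L^2(\mathcal D)$, and $\|\cdot\|_{L^\infty}$ the $L^\infty(\mathcal D)$ norm. Let $A=-\partial_x^2$ on $\mathcal D$ with homogeneous Dirichlet boundary conditions, with eigenfunctions $\phi_k(x)=\sqrt2\sin(k\pi x)$ and eigenvalues $\lambda_k=k^2\pi^2$. $P_N$ is the orthogonal projection onto $\mathrm{span}\{\phi_1,\dots,\phi_N\}$ and $A_N=P_NA$. Fix $T>0$ and $H\in(\frac12,1)$. On a filtered probability space, $\{w_k^H\}_{k}$ are independent real standard fractional Brownian motions with Hurst parameter $H$, $B^H=\sum_kw_k^H\phi_k$ is the cylindrical fBm, and $\int g\,dB^H:=\sum_k\int g\phi_k\,dw_k^H$. *)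

theory Defs
  imports "HOL-Probability.Probability"
begin

text \<open>Dirichlet eigenpairs of A = -d^2/dx^2 on (0,1).\<close>
definition phi :: "nat \<Rightarrow> real \<Rightarrow> real" where
  "phi k x = sqrt 2 * sin (real k * pi * x)"

definition lam :: "nat \<Rightarrow> real" where
  "lam k = (real k)\<^sup>2 * pi\<^sup>2"

definition fbm_cov :: "real \<Rightarrow> real \<Rightarrow> real \<Rightarrow> real" where
  "fbm_cov H s t = (s powr (2*H) + t powr (2*H) - \<bar>t - s\<bar> powr (2*H)) / 2"

definition centered_gaussian_rv :: "'a measure \<Rightarrow> real \<Rightarrow> ('a \<Rightarrow> real) \<Rightarrow> bool" where
  "centered_gaussian_rv M v Y \<longleftrightarrow> Y \<in> borel_measurable M \<and>
     (if v = 0 then (AE \<omega> in M. Y \<omega> = 0)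
      else distributed M lborel Y (normal_density 0 (sqrt v)))"

definition is_fbm :: "'a measure \<Rightarrow> real \<Rightarrow> (real \<Rightarrow> 'a \<Rightarrow> real) \<Rightarrow> bool" where
  "is_fbm M H X \<longleftrightarrow>
     (\<forall>\<omega>\<in>space M. X 0 \<omega> = 0 \<and> continuous_on {0..} (\<lambda>t. X t \<omega>)) \<and>
     (\<forall>n (ts::nat \<Rightarrow> real) (cs::nat \<Rightarrow> real). (\<forall>i<n. 0 \<le> ts i) \<longrightarrow>
        centered_gaussian_rv M (\<Sum>i<n. \<Sum>j<n. cs i * cs j * fbm_cov H (ts i) (ts j))
          (\<lambda>\<omega>. \<Sum>i<n. cs i * X (ts i) \<omega>))"

definition stoch_int :: "(real \<Rightarrow> real) \<Rightarrow> (real \<Rightarrow> 'a \<Rightarrow> real) \<Rightarrow> real \<Rightarrow> 'a \<Rightarrow> real" where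
  "stoch_int g X t \<omega> = lim (\<lambda>n. \<Sum>j<n. g (t * real j / real n) *
       (X (t * real (Suc j) / real n) \<omega> - X (t * real j / real n) \<omega>))"

definition OU :: "(nat \<Rightarrow> real \<Rightarrow> 'a \<Rightarrow> real) \<Rightarrow> nat \<Rightarrow> real \<Rightarrow> real \<Rightarrow> 'a \<Rightarrow> real \<Rightarrow> real" where
  "OU w N \<eta> t \<omega> x = (\<Sum>k=1..N. stoch_int (\<lambda>s. exp (- (lam k + \<eta>) * (t - s))) (w k) t \<omega> * phi k x)"

text \<open>Sup norm on D = (0,1) (equal to the L^\<infinity> norm for continuous functions).\<close>
definition Linf_norm :: "(real \<Rightarrow> real) \<Rightarrow> real" where
  "Linf_norm f = (SUP x\<in>{0<..<1}. \<bar>f x\<bar>)"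

end

(* Each coefficient of O^{N,eta}_t is the limit of Riemann sums sum_i g(s_i) (w(s_{i+1}) - w(s_i))
   with g(s) = exp (-(lambda_k + eta) (t - s)); these sums are centred Gaussians. For H >= 1/2 the
   increments of fBm are nonnegatively correlated, so the variance of such a sum is at most
   sum_i g(s_i)^2 (R(s_{i+1}, t) - R(s_i, t)) with R the fBm covariance. Splitting at t - delta
   bounds it by exp (-2 eta delta) T^(2H) + O(delta), uniformly in t <= T and in the partition;
   choosing delta small and then eta large makes b times this at most 1/4, so E exp (b Y^2) <= 2
   for every Riemann sum Y, and by Fatou also for the limit. The sup norm of O_t is at most sqrt 2
   times the sum of the absolute values of the N coefficients, and exp (a (sum_k |y_k|)^2) is at
   most 1 + sum_k exp (a N^2 y_k^2). Finally Jensen's inequality moves the exponential inside the time integral, and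
   Tonelli's theorem exchanges time and expectation. *)

theory Submission
  imports Defs
begin

lemma powr_convex_nonneg:
  assumes "1 \<le> p"
  shows "convex_on {0..} (\<lambda>x::real. x powr p)"
proof (rule convex_on_linorderI)
  fix t x y :: real
  assume t: "0 < t" "t < 1" and xy: "x \<in> {0..}" "y \<in> {0..}" "x < y"
  show "((1 - t) *\<^sub>R x + t *\<^sub>R y) powr p \<le> (1 - t) * x powr p + t * y powr p"
  proof (cases "x = 0")
    case True
    have "t powr p \<le> t powr 1"
      using t assms by (intro powr_mono') auto
    then have "(t * y) powr p \<le> t * y powr p"
      using t xy by (simp add: powr_mult mult_right_mono)
    then show ?thesis using True by simp
  next
    case False
    then show ?thesis
      using convex_onD[OF powr_convex[OF assms], of t x y] t xy by auto
  qed
qed (simp add: convex_real_interval)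

lemma convex_on_increments_le:
  fixes f :: "real \<Rightarrow> real"
  assumes f: "convex_on {0..} f" and "0 \<le> u" "0 \<le> y" "0 \<le> z"
  shows "f (u + z) + f (u + y) \<le> f (u + y + z) + f u"
proof (cases "y + z = 0")
  case True
  then have "y = 0" "z = 0" using assms by auto
  then show ?thesis by simp
next
  case False
  define a where "a = z / (y + z)"
  have "a * (y + z) = z"
    using False by (simp add: a_def)
  then have a: "0 \<le> a" "a \<le> 1" "a * y + a * z = z"
    using assms False by (auto simp: a_def distrib_left)
  have "f (u + z) \<le> (1 - a) * f u + a * f (u + y + z)"
    using convex_onD[OF f, of a u "u + y + z"] a assms by (simp add: algebra_simps)
  moreover have "f (u + y) \<le> (1 - (1 - a)) * f u + (1 - a) * f (u + y + z)"
    using convex_onD[OF f, of "1 - a" u "u + y + z"] a assms by (simp add: algebra_simps)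
  ultimately show ?thesis by (simp add: algebra_simps)
qed

lemma fbm_cov_sym: "fbm_cov H s t = fbm_cov H t s"
  unfolding fbm_cov_def by (simp add: abs_minus_commute)

lemma fbm_cov_zero_right: "0 \<le> s \<Longrightarrow> fbm_cov H s 0 = 0"
  unfolding fbm_cov_def by simp

lemma fbm_cov_mono_left:
  assumes "0 \<le> H" "0 \<le> x" "x \<le> y" "y \<le> t"
  shows "fbm_cov H x t \<le> fbm_cov H y t"
proof -
  have "x powr (2*H) \<le> y powr (2*H)" "\<bar>t - y\<bar> powr (2*H) \<le> \<bar>t - x\<bar> powr (2*H)"
    using assms by (auto intro: powr_mono2)
  then show ?thesis unfolding fbm_cov_def by (simp add: divide_right_mono)
qed

text \<open>This is where H \<ge> 1/2 enters, through the convexity of x powr (2*H).\<close>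
lemma fbm_cov_increments_nonneg:
  assumes H: "1/2 \<le> H" and "0 \<le> a" "a \<le> b" "b \<le> c" "c \<le> d"
  shows "0 \<le> fbm_cov H b d - fbm_cov H b c - fbm_cov H a d + fbm_cov H a c"
proof -
  let ?f = "\<lambda>x::real. x powr (2*H)"
  have "?f ((c-b) + (d-c)) + ?f ((c-b) + (b-a)) \<le> ?f ((c-b) + (b-a) + (d-c)) + ?f (c-b)"
    using convex_on_increments_le[OF powr_convex_nonneg[of "2*H"], of "c-b" "b-a" "d-c"] assms
    by auto
  moreover have "(c-b) + (d-c) = d-b" "(c-b) + (b-a) = c-a" "(c-b) + (b-a) + (d-c) = d-a"
    by auto
  ultimately have "?f (d-b) + ?f (c-a) \<le> ?f (d-a) + ?f (c-b)"
    by simp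
  then show ?thesis using assms unfolding fbm_cov_def by (simp add: field_simps)
qed

definition incr_cov :: "real \<Rightarrow> (nat \<Rightarrow> real) \<Rightarrow> nat \<Rightarrow> nat \<Rightarrow> real" where
  "incr_cov H s i j = fbm_cov H (s (Suc i)) (s (Suc j)) - fbm_cov H (s (Suc i)) (s j)
      - fbm_cov H (s i) (s (Suc j)) + fbm_cov H (s i) (s j)"

lemma incr_cov_sym: "incr_cov H s i j = incr_cov H s j i"
  unfolding incr_cov_def by (simp add: fbm_cov_sym)

lemma incr_cov_nonneg:
  assumes H: "1/2 \<le> H" and s: "0 \<le> s 0" "mono s"
  shows "0 \<le> incr_cov H s i j"
proof -
  have s_nonneg: "0 \<le> s i" for i
    using s by (meson order_trans le0 monoD)
  have less: "0 \<le> incr_cov H s i j" if "i < j" for i j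
  proof -
    have "s i \<le> s (Suc i)" "s (Suc i) \<le> s j" "s j \<le> s (Suc j)"
      using s that by (auto intro: monoD)
    then show ?thesis
      unfolding incr_cov_def using fbm_cov_increments_nonneg[OF H s_nonneg[of i]] by auto
  qed
  consider "i < j" | "i = j" | "j < i" by linarith
  then show ?thesis
  proof cases
    case 2
    have "s i \<le> s (Suc i)" using s by (simp add: monoD)
    then show ?thesis
      using 2 s_nonneg[of i] unfolding incr_cov_def fbm_cov_def by (simp add: field_simps)
  qed (use less incr_cov_sym in metis)+
qed

lemma incr_cov_row_sum:
  "(\<Sum>j<n. incr_cov H s i j)
     = (fbm_cov H (s (Suc i)) (s n) - fbm_cov H (s (Suc i)) (s 0))
       - (fbm_cov H (s i) (s n) - fbm_cov H (s i) (s 0))"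
proof -
  have "(\<Sum>j<n. incr_cov H s i j)
      = (\<Sum>j<n. fbm_cov H (s (Suc i)) (s (Suc j)) - fbm_cov H (s (Suc i)) (s j))
        - (\<Sum>j<n. fbm_cov H (s i) (s (Suc j)) - fbm_cov H (s i) (s j))"
    unfolding incr_cov_def sum_subtractf[symmetric] by (intro sum.cong) auto
  then show ?thesis
    using sum_lessThan_telescope[of "\<lambda>j. fbm_cov H (s (Suc i)) (s j)" n]
      sum_lessThan_telescope[of "\<lambda>j. fbm_cov H (s i) (s j)" n] by simp
qed

lemma quadratic_form_le_row_sums:
  fixes g :: "nat \<Rightarrow> real" and C :: "nat \<Rightarrow> nat \<Rightarrow> real"
  assumes C: "\<And>i j. 0 \<le> C i j" "\<And>i j. C i j = C j i"
  shows "(\<Sum>i<n. \<Sum>j<n. g i * g j * C i j) \<le> (\<Sum>i<n. (g i)\<^sup>2 * (\<Sum>j<n. C i j))"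
proof -
  have "(\<Sum>i<n. \<Sum>j<n. g i * g j * C i j) \<le> (\<Sum>i<n. \<Sum>j<n. ((g i)\<^sup>2 + (g j)\<^sup>2) / 2 * C i j)"
  proof (intro sum_mono mult_right_mono C)
    fix i j
    have "0 \<le> (g i - g j)\<^sup>2" by simp
    then show "g i * g j \<le> ((g i)\<^sup>2 + (g j)\<^sup>2) / 2"
      by (simp add: power2_eq_square algebra_simps)
  qed
  also have "\<dots> = (\<Sum>i<n. \<Sum>j<n. (g i)\<^sup>2 * C i j) / 2 + (\<Sum>i<n. \<Sum>j<n. (g j)\<^sup>2 * C i j) / 2"
    by (simp add: sum.distrib sum_divide_distrib add_divide_distrib distrib_right)
  also have "(\<Sum>i<n. \<Sum>j<n. (g j)\<^sup>2 * C i j) = (\<Sum>i<n. \<Sum>j<n. (g i)\<^sup>2 * C i j)"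
    by (subst sum.swap) (simp add: C)
  finally show ?thesis by (simp add: sum_distrib_left)
qed

lemma powr_diff_le:
  fixes a b T p :: real
  assumes "0 \<le> a" "a \<le> b" "b \<le> T" "1 \<le> p"
  shows "b powr p - a powr p \<le> p * T powr (p - 1) * (b - a)"
proof (cases "a = b")
  case False
  then have ab: "a < b" using assms by simp
  have "continuous_on {a..b} (\<lambda>x. x powr p)"
    using assms by (intro continuous_on_powr' continuous_intros) auto
  moreover have "(\<lambda>x. x powr p) differentiable (at x)" if "a < x" for x
    using has_real_derivative_powr[of x p] that assms by (auto simp: real_differentiable_def)
  ultimately obtain l z where z: "a < z" "z < b" "DERIV (\<lambda>x. x powr p) z :> l"
    and mvt: "b powr p - a powr p = (b - a) * l"
    using MVT[OF ab] by blast
  have "l = p * z powr (p - 1)"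
    using DERIV_unique[OF z(3) has_real_derivative_powr[of z p]] z assms by auto
  also have "\<dots> \<le> p * T powr (p - 1)"
    using z assms by (intro mult_left_mono powr_mono2) auto
  finally show ?thesis using mvt ab by (simp add: mult.commute mult_left_mono)
qed simp

definition ou_var_bound :: "real \<Rightarrow> real \<Rightarrow> real \<Rightarrow> real \<Rightarrow> real" where
  "ou_var_bound H T \<eta> \<delta> = exp (-2*\<eta>*\<delta>) * T powr (2*H) + 2*H * T powr (2*H - 1) * \<delta> + \<delta> powr (2*H)"

text \<open>Split the telescoping sum at t - \<delta>: before it the weights are at most E, after it
  at most 1, and there the increments add up to at most \<Phi> t - \<Phi> (t - \<delta>).\<close>
lemma weighted_telescope_le:
  fixes \<Phi> :: "real \<Rightarrow> real" and s w :: "nat \<Rightarrow> real"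
  assumes \<Phi>: "\<And>x y. 0 \<le> x \<Longrightarrow> x \<le> y \<Longrightarrow> y \<le> t \<Longrightarrow> \<Phi> x \<le> \<Phi> y"
    and s: "mono s" "s 0 = 0" "s n = t"
    and w: "\<And>i. i < n \<Longrightarrow> w i \<le> 1" "\<And>i. i < n \<Longrightarrow> \<delta> \<le> t - s i \<Longrightarrow> w i \<le> E"
    and E: "0 \<le> E" and \<delta>: "0 \<le> \<delta>"
  shows "(\<Sum>i<n. w i * (\<Phi> (s (Suc i)) - \<Phi> (s i))) \<le> E * (\<Phi> t - \<Phi> 0) + (\<Phi> t - \<Phi> (max 0 (t - \<delta>)))"
proof -
  define \<Psi> where "\<Psi> x = \<Phi> (max x (t - \<delta>))" for x
  have s_nonneg: "0 \<le> s i" for i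
    using monoD[OF s(1), of 0 i] s(2) by simp
  have "w i * (\<Phi> (s (Suc i)) - \<Phi> (s i)) \<le> E * (\<Phi> (s (Suc i)) - \<Phi> (s i)) + (\<Psi> (s (Suc i)) - \<Psi> (s i))"
    if "i < n" for i
  proof -
    have si: "s i \<le> s (Suc i)" "s (Suc i) \<le> t"
      using monoD[OF s(1), of i "Suc i"] monoD[OF s(1), of "Suc i" n] s(3) that by auto
    have D: "0 \<le> \<Phi> (s (Suc i)) - \<Phi> (s i)"
      using \<Phi>[OF s_nonneg si] by simp
    show ?thesis
    proof (cases "\<delta> \<le> t - s i")
      case True
      have "\<Psi> (s i) \<le> \<Psi> (s (Suc i))"
        unfolding \<Psi>_def using si s_nonneg[of i] \<delta> by (intro \<Phi>) auto
      then show ?thesis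
        using D w(2)[OF that True] by (simp add: mult_right_mono add_increasing2)
    next
      case False
      have "w i * (\<Phi> (s (Suc i)) - \<Phi> (s i)) \<le> \<Phi> (s (Suc i)) - \<Phi> (s i)"
        using mult_right_mono[OF w(1)[OF that] D] by simp
      moreover have "0 \<le> E * (\<Phi> (s (Suc i)) - \<Phi> (s i))"
        using D E by simp
      moreover have "\<Psi> (s i) = \<Phi> (s i)" "\<Psi> (s (Suc i)) = \<Phi> (s (Suc i))"
        unfolding \<Psi>_def using False si by auto
      ultimately show ?thesis by linarith
    qed
  qed
  then have "(\<Sum>i<n. w i * (\<Phi> (s (Suc i)) - \<Phi> (s i)))
      \<le> (\<Sum>i<n. E * (\<Phi> (s (Suc i)) - \<Phi> (s i)) + (\<Psi> (s (Suc i)) - \<Psi> (s i)))"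
    by (intro sum_mono) auto
  also have "\<dots> = E * (\<Phi> t - \<Phi> 0) + (\<Psi> t - \<Psi> 0)"
    unfolding sum.distrib sum_distrib_left[symmetric]
    using sum_lessThan_telescope[of "\<lambda>i. \<Phi> (s i)" n] sum_lessThan_telescope[of "\<lambda>i. \<Psi> (s i)" n]
    by (simp add: s(2,3))
  finally show ?thesis
    using \<delta> by (simp add: \<Psi>_def max.commute)
qed

lemma fbm_cov_last_increment_le:
  assumes H: "1/2 \<le> H" and t: "0 \<le> t" "t \<le> T" and \<delta>: "0 < \<delta>"
  shows "fbm_cov H t t - fbm_cov H (max 0 (t - \<delta>)) t \<le> 2*H * T powr (2*H - 1) * \<delta> + \<delta> powr (2*H)"
proof (cases "t \<le> \<delta>")
  case True
  then have "fbm_cov H t t - fbm_cov H (max 0 (t - \<delta>)) t = t powr (2*H)"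
    using t by (simp add: fbm_cov_def)
  also have "\<dots> \<le> \<delta> powr (2*H)"
    using True t H by (simp add: powr_mono2)
  finally show ?thesis
    using H \<delta> by (simp add: add_increasing)
next
  case False
  have "fbm_cov H t t - fbm_cov H (max 0 (t - \<delta>)) t
      = (t powr (2*H) - (t - \<delta>) powr (2*H) + \<delta> powr (2*H)) / 2"
    using False \<delta> by (simp add: fbm_cov_def field_simps)
  also have "\<dots> \<le> (2*H * T powr (2*H - 1) * \<delta> + \<delta> powr (2*H)) / 2"
    using False t H \<delta> powr_diff_le[of "t - \<delta>" t T "2*H"] by simp
  also have "\<dots> \<le> 2*H * T powr (2*H - 1) * \<delta> + \<delta> powr (2*H)"
    using H \<delta> by simp
  finally show ?thesis .
qed

text \<open>The left-hand side is the variance of the Riemann sum of exp (- \<mu> * (t - s)) against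
  fBm over the partition s (see fbm_increment_sum_gaussian).\<close>
lemma incr_cov_quadratic_form_le:
  fixes s :: "nat \<Rightarrow> real"
  assumes H: "1/2 \<le> H" and s: "mono s" "s 0 = 0" "s n = t" and tT: "t \<le> T"
    and \<mu>: "\<eta> \<le> \<mu>" "0 \<le> \<eta>" and \<delta>: "0 < \<delta>"
  shows "(\<Sum>i<n. \<Sum>j<n. exp (- \<mu> * (t - s i)) * exp (- \<mu> * (t - s j)) * incr_cov H s i j)
           \<le> ou_var_bound H T \<eta> \<delta>"
proof -
  define \<Phi> where "\<Phi> x = fbm_cov H x t" for x
  have s_nonneg: "0 \<le> s i" for i
    using monoD[OF s(1), of 0 i] s(2) by simp
  have t: "0 \<le> t"
    using s_nonneg[of n] s(3) by simp
  have "(\<Sum>i<n. \<Sum>j<n. exp (- \<mu> * (t - s i)) * exp (- \<mu> * (t - s j)) * incr_cov H s i j)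
      \<le> (\<Sum>i<n. (exp (- \<mu> * (t - s i)))\<^sup>2 * (\<Sum>j<n. incr_cov H s i j))"
    using incr_cov_nonneg[OF H] incr_cov_sym s by (intro quadratic_form_le_row_sums) auto
  also have "\<dots> = (\<Sum>i<n. exp (-2 * \<mu> * (t - s i)) * (\<Phi> (s (Suc i)) - \<Phi> (s i)))"
    unfolding incr_cov_row_sum \<Phi>_def s(2,3) using s_nonneg
    by (simp add: fbm_cov_zero_right power2_eq_square mult.assoc flip: exp_add)
  also have "\<dots> \<le> exp (-2*\<eta>*\<delta>) * (\<Phi> t - \<Phi> 0) + (\<Phi> t - \<Phi> (max 0 (t - \<delta>)))"
  proof (rule weighted_telescope_le[OF _ s])
    fix x y assume "0 \<le> x" "x \<le> y" "y \<le> t"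
    then show "\<Phi> x \<le> \<Phi> y"
      unfolding \<Phi>_def using H by (intro fbm_cov_mono_left) auto
  next
    fix i assume "i < n"
    then have "s i \<le> t"
      using monoD[OF s(1), of i n] s(3) by simp
    then show "exp (-2 * \<mu> * (t - s i)) \<le> 1"
      using \<mu> by (simp add: mult_nonneg_nonneg)
    assume "\<delta> \<le> t - s i"
    then have "\<eta> * \<delta> \<le> \<mu> * (t - s i)"
      using \<mu> \<delta> by (intro mult_mono) auto
    then show "exp (-2 * \<mu> * (t - s i)) \<le> exp (-2*\<eta>*\<delta>)"
      by simp
  qed (use \<delta> in auto)
  also have "\<dots> \<le> ou_var_bound H T \<eta> \<delta>"
  proof -
    have "\<Phi> t - \<Phi> 0 \<le> T powr (2*H)"
      unfolding \<Phi>_def fbm_cov_def using t tT H by (simp add: powr_mono2)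
    then have "exp (-2*\<eta>*\<delta>) * (\<Phi> t - \<Phi> 0) \<le> exp (-2*\<eta>*\<delta>) * T powr (2*H)"
      by (rule mult_left_mono) simp
    moreover have "\<Phi> t - \<Phi> (max 0 (t - \<delta>)) \<le> 2*H * T powr (2*H - 1) * \<delta> + \<delta> powr (2*H)"
      unfolding \<Phi>_def by (rule fbm_cov_last_increment_le[OF H t tT \<delta>])
    ultimately show ?thesis
      unfolding ou_var_bound_def by linarith
  qed
  finally show ?thesis .
qed

lemma ou_var_bound_small:
  assumes H: "1/2 \<le> H" and T: "0 < T" and b: "0 \<le> b"
  obtains \<eta> \<delta> where "0 \<le> \<eta>" "0 < \<delta>" "b * ou_var_bound H T \<eta> \<delta> \<le> 1/4"
proof -
  define K where "K = 2*H * T powr (2*H - 1) + 1"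
  define \<delta> where "\<delta> = min 1 (1 / (8 * (b + 1) * K))"
  define X where "X = 8 * (b + 1) * T powr (2*H)"
  define \<eta> where "\<eta> = ln (X + 1) / (2 * \<delta>)"
  have K: "1 \<le> K" and X: "0 \<le> X"
    using H T b by (simp_all add: K_def X_def)
  have \<delta>: "0 < \<delta>" "\<delta> \<le> 1"
    using b K by (simp_all add: \<delta>_def)
  have "2*H * T powr (2*H - 1) * \<delta> + \<delta> powr (2*H) \<le> K * \<delta>"
  proof -
    have "\<delta> powr (2*H) \<le> \<delta> powr 1"
      using \<delta> H by (intro powr_mono') auto
    then show ?thesis
      using \<delta> by (simp add: K_def algebra_simps)
  qed
  also have "\<dots> \<le> K * (1 / (8 * (b + 1) * K))"
    using K unfolding \<delta>_def by (intro mult_left_mono) auto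
  also have "\<dots> = 1 / (8 * (b + 1))"
    using K by simp
  finally have small_\<delta>: "2*H * T powr (2*H - 1) * \<delta> + \<delta> powr (2*H) \<le> 1 / (8 * (b + 1))" .
  have "exp (-2*\<eta>*\<delta>) = 1 / (X + 1)"
    using \<delta> X by (simp add: \<eta>_def exp_minus inverse_eq_divide)
  then have "exp (-2*\<eta>*\<delta>) * T powr (2*H) = X / (X + 1) * (1 / (8 * (b + 1)))"
    using b by (simp add: X_def)
  also have "\<dots> \<le> 1 / (8 * (b + 1))"
    using X b by (intro mult_left_le_one_le) auto
  finally have "ou_var_bound H T \<eta> \<delta> \<le> 2 / (8 * (b + 1))"
    using small_\<delta> unfolding ou_var_bound_def by simp
  then have "b * ou_var_bound H T \<eta> \<delta> \<le> b * (2 / (8 * (b + 1)))"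
    using b by (rule mult_left_mono)
  also have "\<dots> \<le> 1/4"
    using b by (simp add: field_simps)
  finally have "b * ou_var_bound H T \<eta> \<delta> \<le> 1/4" .
  moreover have "0 \<le> \<eta>"
    unfolding \<eta>_def using \<delta> X by simp
  ultimately show ?thesis
    using that \<delta> by blast
qed

text \<open>A weighted sum of increments is a linear combination of the process at the 2n times
  incr_times s, so the Gaussian clause of is_fbm applies to it.\<close>
definition incr_coeffs :: "(nat \<Rightarrow> real) \<Rightarrow> nat \<Rightarrow> real" where
  "incr_coeffs g a = (if even a then g (a div 2) else - g (a div 2))"

definition incr_times :: "(nat \<Rightarrow> real) \<Rightarrow> nat \<Rightarrow> real" where
  "incr_times s a = (if even a then s (Suc (a div 2)) else s (a div 2))"

lemma sum_incr_coeffs: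
  "(\<Sum>a<2*n. incr_coeffs g a * f (incr_times s a)) = (\<Sum>i<n. g i * (f (s (Suc i)) - f (s i)))"
proof -
  have "(\<Sum>a<2*n. incr_coeffs g a * f (incr_times s a)) =
     (\<Sum>a<2*n. if even a then g (a div 2) * f (s (Suc (a div 2))) else - g (a div 2) * f (s (a div 2)))"
    unfolding incr_coeffs_def incr_times_def by (intro sum.cong) auto
  also have "\<dots> = (\<Sum>i<n. g i * f (s (Suc i))) + (\<Sum>i<n. - g i * f (s i))"
    by (subst sum_split_even_odd) simp
  also have "\<dots> = (\<Sum>i<n. g i * (f (s (Suc i)) - f (s i)))"
    by (simp add: sum.distrib[symmetric] algebra_simps sum_negf)
  finally show ?thesis .
qed

lemma double_sum_incr_coeffs:
  "(\<Sum>a<2*n. \<Sum>b<2*n. incr_coeffs g a * incr_coeffs g b * fbm_cov H (incr_times s a) (incr_times s b))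
   = (\<Sum>i<n. \<Sum>j<n. g i * g j * incr_cov H s i j)"
proof -
  define F where "F x = (\<Sum>j<n. g j * (fbm_cov H x (s (Suc j)) - fbm_cov H x (s j)))" for x
  have "(\<Sum>a<2*n. \<Sum>b<2*n. incr_coeffs g a * incr_coeffs g b * fbm_cov H (incr_times s a) (incr_times s b))
     = (\<Sum>a<2*n. incr_coeffs g a * (\<Sum>b<2*n. incr_coeffs g b * fbm_cov H (incr_times s a) (incr_times s b)))"
    by (simp add: sum_distrib_left mult.assoc)
  also have "\<dots> = (\<Sum>a<2*n. incr_coeffs g a * F (incr_times s a))"
    unfolding F_def by (subst sum_incr_coeffs) simp
  also have "\<dots> = (\<Sum>i<n. g i * (F (s (Suc i)) - F (s i)))"
    by (rule sum_incr_coeffs)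
  also have "\<dots> = (\<Sum>i<n. \<Sum>j<n. g i * g j * incr_cov H s i j)"
    unfolding F_def incr_cov_def
    by (simp add: sum_subtractf[symmetric] sum_distrib_left algebra_simps)
  finally show ?thesis .
qed

lemma is_fbm_gaussian:
  fixes n :: nat and ts cs :: "nat \<Rightarrow> real"
  assumes "is_fbm M H W" and "\<And>i. i < n \<Longrightarrow> 0 \<le> ts i"
  shows "centered_gaussian_rv M (\<Sum>i<n. \<Sum>j<n. cs i * cs j * fbm_cov H (ts i) (ts j))
           (\<lambda>\<omega>. \<Sum>i<n. cs i * W (ts i) \<omega>)"
proof -
  have "\<forall>n (ts::nat \<Rightarrow> real) (cs::nat \<Rightarrow> real). (\<forall>i<n. 0 \<le> ts i) \<longrightarrow>
      centered_gaussian_rv M (\<Sum>i<n. \<Sum>j<n. cs i * cs j * fbm_cov H (ts i) (ts j))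
        (\<lambda>\<omega>. \<Sum>i<n. cs i * W (ts i) \<omega>)"
    using assms(1) unfolding is_fbm_def by (rule conjunct2)
  from this[THEN spec[of _ n], THEN spec[of _ ts], THEN spec[of _ cs]] assms(2) show ?thesis
    by simp
qed

lemma fbm_increment_sum_gaussian:
  assumes "is_fbm M H W" and "\<And>i. 0 \<le> s i"
  shows "centered_gaussian_rv M (\<Sum>i<n. \<Sum>j<n. g i * g j * incr_cov H s i j)
           (\<lambda>\<omega>. \<Sum>j<n. g j * (W (s (Suc j)) \<omega> - W (s j) \<omega>))"
proof -
  have "centered_gaussian_rv M
      (\<Sum>a<2*n. \<Sum>b<2*n. incr_coeffs g a * incr_coeffs g b * fbm_cov H (incr_times s a) (incr_times s b))
      (\<lambda>\<omega>. \<Sum>a<2*n. incr_coeffs g a * W (incr_times s a) \<omega>)"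
    using assms by (intro is_fbm_gaussian) (simp_all add: incr_times_def)
  moreover have "(\<lambda>\<omega>. \<Sum>a<2*n. incr_coeffs g a * W (incr_times s a) \<omega>)
      = (\<lambda>\<omega>. \<Sum>j<n. g j * (W (s (Suc j)) \<omega> - W (s j) \<omega>))"
    by (rule ext) (rule sum_incr_coeffs)
  ultimately show ?thesis
    by (simp only: double_sum_incr_coeffs)
qed

lemma fbm_measurable:
  assumes "is_fbm M H W" "0 \<le> t"
  shows "W t \<in> borel_measurable M"
proof -
  have "centered_gaussian_rv M (fbm_cov H t t) (\<lambda>\<omega>. W t \<omega>)"
    using is_fbm_gaussian[OF assms(1), of 1 "\<lambda>_. t" "\<lambda>_. 1"] assms(2) by simp
  then show ?thesis
    unfolding centered_gaussian_rv_def by simp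
qed

lemma normal_density_times_exp_square:
  fixes v b x :: real
  assumes v: "0 < v" and bv: "2 * b * v < 1"
  defines "v' \<equiv> v / (1 - 2 * b * v)"
  shows "normal_density 0 (sqrt v) x * exp (b * x\<^sup>2)
           = sqrt (1 / (1 - 2 * b * v)) * normal_density 0 (sqrt v') x"
proof -
  have v': "0 < v'"
    using v bv by (simp add: v'_def)
  have "- (x\<^sup>2 / (2 * v)) + b * x\<^sup>2 = - (x\<^sup>2 / (2 * v'))"
    using v bv by (simp add: v'_def field_simps)
  then have exps: "exp (- (x\<^sup>2 / (2 * v))) * exp (b * x\<^sup>2) = exp (- (x\<^sup>2 / (2 * v')))"
    by (simp flip: exp_add)
  have "sqrt (2 * pi * v') = sqrt (2 * pi * v) * sqrt (1 / (1 - 2 * b * v))"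
    by (simp add: v'_def real_sqrt_mult[symmetric])
  then have factors: "1 / sqrt (2 * pi * v) = sqrt (1 / (1 - 2 * b * v)) * (1 / sqrt (2 * pi * v'))"
    using v bv by (simp add: field_simps)
  have "normal_density 0 (sqrt v) x * exp (b * x\<^sup>2) = 1 / sqrt (2 * pi * v) * exp (- x\<^sup>2 / (2 * v'))"
    unfolding normal_density_def using v by (simp add: exps[symmetric] mult.assoc)
  also have "\<dots> = sqrt (1 / (1 - 2 * b * v)) * normal_density 0 (sqrt v') x"
    unfolding normal_density_def factors using v' by simp
  finally show ?thesis .
qed

lemma centered_gaussian_exp_square_moment:
  assumes M: "prob_space M" and Y: "centered_gaussian_rv M v Y"
    and v: "0 \<le> v" and b: "b * v \<le> 1/4"
  shows "(\<integral>\<^sup>+\<omega>. ennreal (exp (b * (Y \<omega>)\<^sup>2)) \<partial>M) \<le> 2"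
proof (cases "v = 0")
  case True
  then have "AE \<omega> in M. Y \<omega> = 0"
    using Y unfolding centered_gaussian_rv_def by simp
  then have "(\<integral>\<^sup>+\<omega>. ennreal (exp (b * (Y \<omega>)\<^sup>2)) \<partial>M) = (\<integral>\<^sup>+\<omega>. 1 \<partial>M)"
    by (intro nn_integral_cong_AE) auto
  then show ?thesis
    using prob_space.emeasure_space_1[OF M] by simp
next
  case False
  then have v: "0 < v" and bv: "2 * b * v < 1"
    using v b by auto
  define v' where "v' = v / (1 - 2 * b * v)"
  define C where "C = sqrt (1 / (1 - 2 * b * v))"
  have dist: "distributed M lborel Y (\<lambda>x. ennreal (normal_density 0 (sqrt v) x))"
    using Y False unfolding centered_gaussian_rv_def by simp
  have "(\<integral>\<^sup>+\<omega>. ennreal (exp (b * (Y \<omega>)\<^sup>2)) \<partial>M)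
      = (\<integral>\<^sup>+x. ennreal (normal_density 0 (sqrt v) x) * ennreal (exp (b * x\<^sup>2)) \<partial>lborel)"
    by (rule distributed_nn_integral[OF dist, symmetric]) simp
  also have "\<dots> = (\<integral>\<^sup>+x. ennreal C * ennreal (normal_density 0 (sqrt v') x) \<partial>lborel)"
    using normal_density_times_exp_square[OF v bv] bv
    by (intro nn_integral_cong) (simp add: C_def v'_def ennreal_mult[symmetric])
  also have "\<dots> = ennreal C * (\<integral>\<^sup>+x. ennreal (normal_density 0 (sqrt v') x) \<partial>lborel)"
    by (rule nn_integral_cmult) simp
  also have "(\<integral>\<^sup>+x. ennreal (normal_density 0 (sqrt v') x) \<partial>lborel) = 1"
    using v bv by (subst nn_integral_eq_integral) (auto simp: v'_def)
  also have "C \<le> 2"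
  proof -
    have "1 / (1 - 2 * b * v) \<le> 4"
      using b bv by (simp add: field_simps)
    then have "C \<le> sqrt 4"
      unfolding C_def by (rule real_sqrt_le_mono)
    then show ?thesis by simp
  qed
  then have "ennreal C \<le> 2"
    by (metis ennreal_leI ennreal_numeral)
  finally show ?thesis by simp
qed

text \<open>Fatou's lemma for lim. Where the sequence diverges, lim returns the unspecified
  value THE x. False, which costs the additive constant f (THE x. False).\<close>
lemma nn_integral_lim_le:
  fixes R :: "nat \<Rightarrow> 'a \<Rightarrow> real" and f :: "real \<Rightarrow> ennreal"
  assumes M: "prob_space M" and f: "continuous_on UNIV f"
    and R: "\<And>n. R n \<in> borel_measurable M"
    and B: "\<And>n. (\<integral>\<^sup>+\<omega>. f (R n \<omega>) \<partial>M) \<le> B"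
  shows "(\<integral>\<^sup>+\<omega>. f (lim (\<lambda>n. R n \<omega>)) \<partial>M) \<le> B + f (THE x. False)"
proof -
  have fR: "(\<lambda>\<omega>. f (R n \<omega>)) \<in> borel_measurable M" for n
    using measurable_compose[OF R borel_measurable_continuous_onI[OF f]] .
  have pointwise: "f (lim (\<lambda>n. R n \<omega>)) \<le> liminf (\<lambda>n. f (R n \<omega>)) + f (THE x. False)" for \<omega>
  proof (cases "convergent (\<lambda>n. R n \<omega>)")
    case True
    then have "(\<lambda>n. f (R n \<omega>)) \<longlonglongrightarrow> f (lim (\<lambda>n. R n \<omega>))"
      using f by (intro continuous_on_tendsto_compose[of UNIV f]) (auto simp: convergent_LIMSEQ_iff)
    then show ?thesis
      by (simp add: lim_imp_Liminf add_increasing2)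
  next
    case False
    then have "lim (\<lambda>n. R n \<omega>) = (THE x. False)"
      unfolding lim_def convergent_def by simp
    then show ?thesis
      by (simp add: add_increasing)
  qed
  have "(\<integral>\<^sup>+\<omega>. f (lim (\<lambda>n. R n \<omega>)) \<partial>M) \<le> (\<integral>\<^sup>+\<omega>. liminf (\<lambda>n. f (R n \<omega>)) + f (THE x. False) \<partial>M)"
    by (intro nn_integral_mono pointwise)
  also have "\<dots> = (\<integral>\<^sup>+\<omega>. liminf (\<lambda>n. f (R n \<omega>)) \<partial>M) + f (THE x. False)"
    using fR prob_space.emeasure_space_1[OF M] by (simp add: nn_integral_add)
  also have "(\<integral>\<^sup>+\<omega>. liminf (\<lambda>n. f (R n \<omega>)) \<partial>M) \<le> liminf (\<lambda>n. \<integral>\<^sup>+\<omega>. f (R n \<omega>) \<partial>M)"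
    by (rule nn_integral_liminf[OF fR])
  also have "\<dots> \<le> limsup (\<lambda>n. \<integral>\<^sup>+\<omega>. f (R n \<omega>) \<partial>M)"
    by (rule Liminf_le_Limsup) simp
  also have "\<dots> \<le> B"
    using B by (intro Limsup_bounded always_eventually) auto
  finally show ?thesis by (simp add: add_right_mono)
qed

definition riemann_sum :: "(real \<Rightarrow> real) \<Rightarrow> (real \<Rightarrow> 'a \<Rightarrow> real) \<Rightarrow> real \<Rightarrow> nat \<Rightarrow> 'a \<Rightarrow> real" where
  "riemann_sum g X t n \<omega> = (\<Sum>j<n. g (t * real j / real n) *
       (X (t * real (Suc j) / real n) \<omega> - X (t * real j / real n) \<omega>))"

lemma stoch_int_eq_lim_riemann_sum: "stoch_int g X t \<omega> = lim (\<lambda>n. riemann_sum g X t n \<omega>)"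
  unfolding stoch_int_def riemann_sum_def ..

lemma borel_measurable_riemann_sum:
  assumes X: "\<And>s. 0 \<le> s \<Longrightarrow> X s \<in> borel_measurable M" and t: "0 \<le> t"
  shows "riemann_sum g X t n \<in> borel_measurable M"
proof -
  have "X (t * real j / real n) \<in> borel_measurable M" for j
    using X t by simp
  then show ?thesis
    unfolding riemann_sum_def[abs_def] by measurable
qed

lemma borel_measurable_stoch_int:
  assumes "\<And>s. 0 \<le> s \<Longrightarrow> X s \<in> borel_measurable M" and "0 \<le> t"
  shows "stoch_int g X t \<in> borel_measurable M"
proof -
  have "(\<lambda>\<omega>. lim (\<lambda>n. riemann_sum g X t n \<omega>)) \<in> borel_measurable M"
    using borel_measurable_riemann_sum[OF assms] by (rule borel_measurable_lim_metric)
  then show ?thesis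
    by (simp add: stoch_int_eq_lim_riemann_sum[abs_def])
qed

lemma fbm_stoch_int_exp_square_moment:
  assumes M: "prob_space M" and W: "is_fbm M H W" and H: "1/2 \<le> H"
    and t: "0 \<le> t" "t \<le> T" and \<mu>: "\<eta> \<le> \<mu>" "0 \<le> \<eta>" and \<delta>: "0 < \<delta>" and b: "0 \<le> b"
    and small: "b * ou_var_bound H T \<eta> \<delta> \<le> 1/4"
  shows "(\<integral>\<^sup>+\<omega>. ennreal (exp (b * (stoch_int (\<lambda>s. exp (- \<mu> * (t - s))) W t \<omega>)\<^sup>2)) \<partial>M)
           \<le> 2 + ennreal (exp (b * (THE x. False)\<^sup>2))"
  unfolding stoch_int_eq_lim_riemann_sum
proof (rule nn_integral_lim_le[OF M, where f = "\<lambda>x. ennreal (exp (b * x\<^sup>2))"])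
  show "continuous_on UNIV (\<lambda>x. ennreal (exp (b * x\<^sup>2)))"
    by (intro continuous_on_ennreal continuous_intros)
  fix n
  define s where "s i = t * real i / real n" for i
  have s_nonneg: "0 \<le> s i" for i
    using t by (simp add: s_def)
  have sum_eq: "riemann_sum (\<lambda>s. exp (- \<mu> * (t - s))) W t n
      = (\<lambda>\<omega>. \<Sum>j<n. exp (- \<mu> * (t - s j)) * (W (s (Suc j)) \<omega> - W (s j) \<omega>))"
    by (simp add: riemann_sum_def s_def fun_eq_iff)
  show "riemann_sum (\<lambda>s. exp (- \<mu> * (t - s))) W t n \<in> borel_measurable M"
    using fbm_measurable[OF W] t(1) by (rule borel_measurable_riemann_sum)
  define v where "v = (\<Sum>i<n. \<Sum>j<n. exp (- \<mu> * (t - s i)) * exp (- \<mu> * (t - s j)) * incr_cov H s i j)"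
  have "b * v \<le> 1/4"
  proof (cases "n = 0")
    case False
    have "mono s" "s 0 = 0" "s n = t"
      using t False by (auto simp: s_def mono_def divide_right_mono mult_left_mono)
    then have "v \<le> ou_var_bound H T \<eta> \<delta>"
      unfolding v_def using incr_cov_quadratic_form_le[OF H _ _ _ t(2) \<mu> \<delta>] by blast
    then show ?thesis
      using small b by (meson mult_left_mono order_trans)
  qed (simp add: v_def)
  moreover have "0 \<le> v"
    unfolding v_def using incr_cov_nonneg[OF H] t
    by (intro sum_nonneg mult_nonneg_nonneg) (auto simp: s_def mono_def divide_right_mono mult_left_mono)
  moreover have "centered_gaussian_rv M v (riemann_sum (\<lambda>s. exp (- \<mu> * (t - s))) W t n)"
    unfolding sum_eq v_def by (rule fbm_increment_sum_gaussian[OF W s_nonneg])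
  ultimately show "(\<integral>\<^sup>+\<omega>. ennreal (exp (b * (riemann_sum (\<lambda>s. exp (- \<mu> * (t - s))) W t n \<omega>)\<^sup>2)) \<partial>M) \<le> 2"
    using centered_gaussian_exp_square_moment[OF M] by blast
qed

lemma exp_square_sum_abs_le:
  fixes y :: "nat \<Rightarrow> real"
  assumes I: "finite I" and a: "0 \<le> a"
  shows "exp (a * (\<Sum>k\<in>I. \<bar>y k\<bar>)\<^sup>2) \<le> 1 + (\<Sum>k\<in>I. exp (a * (real (card I))\<^sup>2 * (y k)\<^sup>2))"
proof (cases "I = {}")
  case False
  define m where "m = Max ((\<lambda>k. \<bar>y k\<bar>) ` I)"
  have "m \<in> (\<lambda>k. \<bar>y k\<bar>) ` I"
    unfolding m_def using I False by (intro Max_in) auto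
  then obtain k0 where k0: "k0 \<in> I" "m = \<bar>y k0\<bar>"
    by auto
  have "(\<Sum>k\<in>I. \<bar>y k\<bar>) \<le> (\<Sum>k\<in>I. m)"
    unfolding m_def using I by (intro sum_mono) auto
  then have "(\<Sum>k\<in>I. \<bar>y k\<bar>)\<^sup>2 \<le> (real (card I) * m)\<^sup>2"
    by (intro power_mono) (auto intro: sum_nonneg)
  then have "(\<Sum>k\<in>I. \<bar>y k\<bar>)\<^sup>2 \<le> (real (card I))\<^sup>2 * (y k0)\<^sup>2"
    by (simp add: k0 power_mult_distrib)
  then have "exp (a * (\<Sum>k\<in>I. \<bar>y k\<bar>)\<^sup>2) \<le> exp (a * (real (card I))\<^sup>2 * (y k0)\<^sup>2)"
    using a by (simp add: mult_left_mono mult.assoc)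
  also have "\<dots> \<le> (\<Sum>k\<in>I. exp (a * (real (card I))\<^sup>2 * (y k)\<^sup>2))"
    using I k0(1) by (intro member_le_sum) auto
  finally show ?thesis by simp
qed simp

lemma nn_integral_exp_square_sum_le:
  fixes Y :: "nat \<Rightarrow> 'a \<Rightarrow> real"
  assumes M: "prob_space M" and I: "finite I" and a: "0 \<le> a"
    and Y: "\<And>k. k \<in> I \<Longrightarrow> Y k \<in> borel_measurable M"
    and B: "\<And>k. k \<in> I \<Longrightarrow> (\<integral>\<^sup>+\<omega>. ennreal (exp (a * (real (card I))\<^sup>2 * (Y k \<omega>)\<^sup>2)) \<partial>M) \<le> B"
  shows "(\<integral>\<^sup>+\<omega>. ennreal (exp (a * (\<Sum>k\<in>I. \<bar>Y k \<omega>\<bar>)\<^sup>2)) \<partial>M) \<le> 1 + of_nat (card I) * B"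
proof -
  have Y_exp: "(\<lambda>\<omega>. ennreal (exp (a * (real (card I))\<^sup>2 * (Y k \<omega>)\<^sup>2))) \<in> borel_measurable M"
    if "k \<in> I" for k
    using Y[OF that] by measurable
  have "(\<integral>\<^sup>+\<omega>. ennreal (exp (a * (\<Sum>k\<in>I. \<bar>Y k \<omega>\<bar>)\<^sup>2)) \<partial>M)
      \<le> (\<integral>\<^sup>+\<omega>. 1 + (\<Sum>k\<in>I. ennreal (exp (a * (real (card I))\<^sup>2 * (Y k \<omega>)\<^sup>2))) \<partial>M)"
  proof (intro nn_integral_mono)
    fix \<omega>
    have "ennreal (exp (a * (\<Sum>k\<in>I. \<bar>Y k \<omega>\<bar>)\<^sup>2))
        \<le> ennreal (1 + (\<Sum>k\<in>I. exp (a * (real (card I))\<^sup>2 * (Y k \<omega>)\<^sup>2)))"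
      by (rule ennreal_leI[OF exp_square_sum_abs_le[OF I a]])
    then show "ennreal (exp (a * (\<Sum>k\<in>I. \<bar>Y k \<omega>\<bar>)\<^sup>2))
        \<le> 1 + (\<Sum>k\<in>I. ennreal (exp (a * (real (card I))\<^sup>2 * (Y k \<omega>)\<^sup>2)))"
      by (simp add: sum_nonneg)
  qed
  also have "\<dots> = (\<integral>\<^sup>+\<omega>. 1 \<partial>M)
      + (\<integral>\<^sup>+\<omega>. (\<Sum>k\<in>I. ennreal (exp (a * (real (card I))\<^sup>2 * (Y k \<omega>)\<^sup>2))) \<partial>M)"
    using Y_exp by (intro nn_integral_add borel_measurable_sum) auto
  also have "\<dots> = 1 + (\<Sum>k\<in>I. \<integral>\<^sup>+\<omega>. ennreal (exp (a * (real (card I))\<^sup>2 * (Y k \<omega>)\<^sup>2)) \<partial>M)"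
    using Y_exp prob_space.emeasure_space_1[OF M] by (simp add: nn_integral_sum del: sum_ennreal)
  also have "\<dots> \<le> 1 + (\<Sum>k\<in>I. B)"
    using B by (intro add_left_mono sum_mono) auto
  finally show ?thesis by simp
qed

lemma ou_coeffs_exp_square_moment:
  fixes w :: "nat \<Rightarrow> real \<Rightarrow> 'a \<Rightarrow> real"
  assumes M: "prob_space M" and W: "\<And>k. is_fbm M H (w k)" and H: "1/2 \<le> H"
    and t: "0 \<le> t" "t \<le> T" and \<eta>: "0 \<le> \<eta>" and \<delta>: "0 < \<delta>" and a: "0 \<le> a"
    and small: "a * (real N)\<^sup>2 * ou_var_bound H T \<eta> \<delta> \<le> 1/4"
  shows "(\<integral>\<^sup>+\<omega>. ennreal (exp (a * (\<Sum>k=1..N. \<bar>stoch_int (\<lambda>s. exp (- (lam k + \<eta>) * (t - s))) (w k) t \<omega>\<bar>)\<^sup>2)) \<partial>M)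
           \<le> 1 + of_nat N * (2 + ennreal (exp (a * (real N)\<^sup>2 * (THE x. False)\<^sup>2)))"
proof -
  have "stoch_int (\<lambda>s. exp (- (lam k + \<eta>) * (t - s))) (w k) t \<in> borel_measurable M" for k
    using fbm_measurable[OF W] t(1) by (rule borel_measurable_stoch_int)
  moreover have "(\<integral>\<^sup>+\<omega>. ennreal (exp (a * (real N)\<^sup>2
      * (stoch_int (\<lambda>s. exp (- (lam k + \<eta>) * (t - s))) (w k) t \<omega>)\<^sup>2)) \<partial>M)
      \<le> 2 + ennreal (exp (a * (real N)\<^sup>2 * (THE x. False)\<^sup>2))" for k
    using a \<eta> by (intro fbm_stoch_int_exp_square_moment[OF M W H t _ \<eta> \<delta> _ small]) (auto simp: lam_def)
  ultimately show ?thesis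
    using nn_integral_exp_square_sum_le[OF M _ a, of "{1..N}"
        "\<lambda>k. stoch_int (\<lambda>s. exp (- (lam k + \<eta>) * (t - s))) (w k) t"
        "2 + ennreal (exp (a * (real N)\<^sup>2 * (THE x. False)\<^sup>2))"]
    by simp
qed

lemma floor_mult_divide_LIMSEQ:
  fixes x :: real
  shows "(\<lambda>m. of_int \<lfloor>real (Suc m) * x\<rfloor> / real (Suc m)) \<longlonglongrightarrow> x"
proof (rule tendsto_sandwich)
  show "\<forall>\<^sub>F m in sequentially. x - inverse (real (Suc m)) \<le> of_int \<lfloor>real (Suc m) * x\<rfloor> / real (Suc m)"
  proof (intro always_eventually allI)
    fix m
    have "real (Suc m) * x - 1 \<le> of_int \<lfloor>real (Suc m) * x\<rfloor>"
      by linarith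
    then have "(real (Suc m) * x - 1) / real (Suc m) \<le> of_int \<lfloor>real (Suc m) * x\<rfloor> / real (Suc m)"
      by (intro divide_right_mono) auto
    moreover have "(real (Suc m) * x - 1) / real (Suc m) = x - inverse (real (Suc m))"
      by (simp add: field_simps)
    ultimately show "x - inverse (real (Suc m)) \<le> of_int \<lfloor>real (Suc m) * x\<rfloor> / real (Suc m)"
      by simp
  qed
  show "\<forall>\<^sub>F m in sequentially. of_int \<lfloor>real (Suc m) * x\<rfloor> / real (Suc m) \<le> x"
  proof (intro always_eventually allI)
    fix m
    have "of_int \<lfloor>real (Suc m) * x\<rfloor> \<le> real (Suc m) * x"
      by linarith
    then show "of_int \<lfloor>real (Suc m) * x\<rfloor> / real (Suc m) \<le> x"
      by (simp add: field_simps)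
  qed
  show "(\<lambda>m. x - inverse (real (Suc m))) \<longlonglongrightarrow> x"
    using tendsto_diff[OF tendsto_const LIMSEQ_inverse_real_of_nat, of x] by simp
qed simp

text \<open>The grid approximations X (\<lfloor>m t\<rfloor> / m) are measurable because they take countably
  many values in t, and they converge by path continuity.\<close>
lemma borel_measurable_continuous_process:
  fixes X :: "real \<Rightarrow> 'a \<Rightarrow> real"
  assumes cont: "\<forall>\<omega>\<in>space M. continuous_on {0..} (\<lambda>t. X t \<omega>)"
    and meas: "\<And>t. 0 \<le> t \<Longrightarrow> X t \<in> borel_measurable M"
  shows "(\<lambda>p. X (max 0 (fst p)) (snd p)) \<in> borel_measurable (lborel \<Otimes>\<^sub>M M)"
proof (rule borel_measurable_LIMSEQ_metric)
  define F where "F m p = X (max 0 (of_int \<lfloor>real (Suc m) * max 0 (fst p)\<rfloor> / real (Suc m))) (snd p)"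
    for m and p :: "real \<times> 'a"
  show "F m \<in> borel_measurable (lborel \<Otimes>\<^sub>M M)" for m
  proof -
    have index: "(\<lambda>p::real \<times> 'a. \<lfloor>real (Suc m) * max 0 (fst p)\<rfloor>)
        \<in> measurable (lborel \<Otimes>\<^sub>M M) (count_space UNIV)"
      by measurable
    have at_grid: "(\<lambda>p. X (max 0 (of_int i / real (Suc m))) (snd p)) \<in> borel_measurable (lborel \<Otimes>\<^sub>M M)"
      for i :: int
      using meas by (intro measurable_compose[OF measurable_snd]) auto
    show ?thesis
      unfolding F_def by (rule measurable_compose_countable'[where I=UNIV, OF at_grid index]) auto
  qed
  show "(\<lambda>m. F m p) \<longlonglongrightarrow> X (max 0 (fst p)) (snd p)" if "p \<in> space (lborel \<Otimes>\<^sub>M M)" for p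
  proof -
    have \<omega>: "snd p \<in> space M"
      using that by (auto simp: space_pair_measure)
    have "(\<lambda>m. max 0 (of_int \<lfloor>real (Suc m) * max 0 (fst p)\<rfloor> / real (Suc m)))
        \<longlonglongrightarrow> max 0 (max 0 (fst p))"
      by (intro tendsto_max tendsto_const floor_mult_divide_LIMSEQ)
    from continuous_on_tendsto_compose[OF cont[rule_format, OF \<omega>] this]
    have "(\<lambda>m. F m p) \<longlonglongrightarrow> X (max 0 (max 0 (fst p))) (snd p)"
      unfolding F_def by auto
    then show ?thesis by simp
  qed
qed

lemma borel_measurable_stoch_int_exp:
  fixes X :: "real \<Rightarrow> 'a \<Rightarrow> real"
  assumes cont: "\<forall>\<omega>\<in>space M. continuous_on {0..} (\<lambda>t. X t \<omega>)"
    and meas: "\<And>t. 0 \<le> t \<Longrightarrow> X t \<in> borel_measurable M"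
  shows "(\<lambda>p. stoch_int (\<lambda>s. exp (- \<mu> * (max 0 (fst p) - s))) X (max 0 (fst p)) (snd p))
           \<in> borel_measurable (lborel \<Otimes>\<^sub>M M)"
proof -
  have X_at: "(\<lambda>p. X (max 0 (fst p) * real j / real n) (snd p)) \<in> borel_measurable (lborel \<Otimes>\<^sub>M M)"
    for j n
  proof -
    have "(\<lambda>p::real \<times> 'a. (max 0 (fst p) * real j / real n, snd p))
        \<in> measurable (lborel \<Otimes>\<^sub>M M) (lborel \<Otimes>\<^sub>M M)"
      by measurable
    from measurable_compose[OF this borel_measurable_continuous_process[OF cont meas]]
    show ?thesis by simp
  qed
  have "(\<lambda>p. riemann_sum (\<lambda>s. exp (- \<mu> * (max 0 (fst p) - s))) X (max 0 (fst p)) n (snd p))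
      \<in> borel_measurable (lborel \<Otimes>\<^sub>M M)" for n
    unfolding riemann_sum_def
    by (intro borel_measurable_sum borel_measurable_times borel_measurable_diff X_at) measurable
  then show ?thesis
    unfolding stoch_int_eq_lim_riemann_sum by (rule borel_measurable_lim_metric)
qed

lemma Linf_norm_phi_sum_le:
  fixes a :: "nat \<Rightarrow> real"
  shows "(Linf_norm (\<lambda>x. \<Sum>k=1..N. a k * phi k x))\<^sup>2 \<le> 2 * (\<Sum>k=1..N. \<bar>a k\<bar>)\<^sup>2"
proof -
  define B where "B = sqrt 2 * (\<Sum>k=1..N. \<bar>a k\<bar>)"
  have bound: "\<bar>\<Sum>k=1..N. a k * phi k x\<bar> \<le> B" for x
  proof -
    have "\<bar>\<Sum>k=1..N. a k * phi k x\<bar> \<le> (\<Sum>k=1..N. \<bar>a k\<bar> * \<bar>phi k x\<bar>)"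
      using sum_abs[of "\<lambda>k. a k * phi k x" "{1..N}"] by (simp add: abs_mult)
    also have "\<dots> \<le> (\<Sum>k=1..N. \<bar>a k\<bar> * sqrt 2)"
      by (intro sum_mono mult_left_mono) (auto simp: phi_def abs_mult)
    finally show ?thesis
      by (simp add: B_def sum_distrib_left mult.commute)
  qed
  have "Linf_norm (\<lambda>x. \<Sum>k=1..N. a k * phi k x) \<le> B"
    unfolding Linf_norm_def using bound by (intro cSUP_least) auto
  moreover have "0 \<le> Linf_norm (\<lambda>x. \<Sum>k=1..N. a k * phi k x)"
    unfolding Linf_norm_def using bound
    by (intro cSUP_upper2[of _ _ "1/2"] bdd_aboveI2[where M = B]) auto
  ultimately have "(Linf_norm (\<lambda>x. \<Sum>k=1..N. a k * phi k x))\<^sup>2 \<le> B\<^sup>2"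
    by (intro power_mono)
  then show ?thesis
    by (simp add: B_def power_mult_distrib)
qed

text \<open>Jensen's inequality for exp, via the tangent line of exp at the mean.\<close>
lemma exp_set_integral_le_integrable:
  fixes f h :: "real \<Rightarrow> real"
  assumes T: "0 < T" and c: "0 \<le> c" and h: "h \<in> borel_measurable lborel"
    and f: "set_integrable lborel {0..T} f" and f_le_h: "\<And>t. t \<in> {0..T} \<Longrightarrow> f t \<le> h t"
  shows "ennreal (T * exp (c * (LINT t:{0..T}|lborel. f t)))
           \<le> (\<integral>\<^sup>+t. ennreal (exp (c * T * h t)) * indicator {0..T} t \<partial>lborel)"
    (is "_ \<le> ?Q")
proof (cases "?Q = \<infinity>")
  case False
  define m where "m = c * (LINT t:{0..T}|lborel. f t)"
  define q where "q t = exp (c * T * h t) * indicator {0..T} t" for t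
  define r where "r t = exp m * (indicator {0..T} t * (1 - m) + c * T * (indicator {0..T} t * f t))" for t
  have Q_eq: "?Q = (\<integral>\<^sup>+t. ennreal (q t) \<partial>lborel)"
    unfolding q_def by (intro nn_integral_cong) (auto simp: indicator_def)
  have q_meas: "q \<in> borel_measurable lborel"
    unfolding q_def using h by measurable
  have q: "integrable lborel q"
    using False q_meas unfolding Q_eq
    by (intro integrableI_nonneg) (auto simp: q_def top.not_eq_extremum)
  have f': "integrable lborel (\<lambda>t. indicator {0..T} t * f t)"
    using f unfolding set_integrable_def by simp
  have ind: "integrable lborel (\<lambda>t. indicator {0..T} t :: real)"
    using T by (simp add: integrable_indicator_iff)
  have r_le_q: "r t \<le> q t" for t
  proof (cases "t \<in> {0..T}")
    case True
    have "exp m * (1 + (c * T * f t - m)) \<le> exp m * exp (c * T * f t - m)"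
      by (intro mult_left_mono exp_ge_add_one_self) auto
    also have "\<dots> \<le> exp (c * T * h t)"
      using f_le_h[OF True] c T by (simp add: exp_diff mult_left_mono)
    finally show ?thesis
      using True by (simp add: r_def q_def algebra_simps)
  qed (simp add: r_def q_def)
  have "T * exp m = exp m * (T * (1 - m) + c * T * (LINT t:{0..T}|lborel. f t))"
    by (simp add: m_def algebra_simps)
  also have "\<dots> = integral\<^sup>L lborel r"
    unfolding r_def using ind f' T by (simp add: set_lebesgue_integral_def)
  also have "\<dots> \<le> integral\<^sup>L lborel q"
    using ind f' q r_le_q unfolding r_def by (intro integral_mono) auto
  finally have "T * exp m \<le> integral\<^sup>L lborel q" .
  moreover have "?Q = ennreal (integral\<^sup>L lborel q)"
    unfolding Q_eq by (rule nn_integral_eq_integral[OF q]) (simp add: q_def)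
  ultimately show ?thesis
    unfolding m_def by (simp add: ennreal_leI)
qed simp

text \<open>The time integrand need not be measurable, so the bound goes through a measurable
  majorant h; a non-integrable f has integral 0 by convention, which the bound still covers.\<close>
lemma exp_set_integral_le:
  fixes f h :: "real \<Rightarrow> real"
  assumes T: "0 < T" and c: "0 \<le> c" and h: "h \<in> borel_measurable lborel"
    and f_h: "\<And>t. t \<in> {0..T} \<Longrightarrow> 0 \<le> f t \<and> f t \<le> h t"
  shows "ennreal (exp (c * (LINT t:{0..T}|lborel. f t)))
           \<le> ennreal (1/T) * (\<integral>\<^sup>+t. ennreal (exp (c * T * h t)) * indicator {0..T} t \<partial>lborel)"
proof -
  have "ennreal (T * exp (c * (LINT t:{0..T}|lborel. f t)))
      \<le> (\<integral>\<^sup>+t. ennreal (exp (c * T * h t)) * indicator {0..T} t \<partial>lborel)"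
  proof (cases "set_integrable lborel {0..T} f")
    case True
    then show ?thesis
      using exp_set_integral_le_integrable[OF T c h] f_h by blast
  next
    case False
    then have "(LINT t:{0..T}|lborel. f t) = 0"
      unfolding set_integrable_def set_lebesgue_integral_def by (rule not_integrable_integral_eq)
    then have "ennreal (T * exp (c * (LINT t:{0..T}|lborel. f t))) = (\<integral>\<^sup>+t. indicator {0..T} t \<partial>lborel)"
      using T by simp
    also have "\<dots> \<le> (\<integral>\<^sup>+t. ennreal (exp (c * T * h t)) * indicator {0..T} t \<partial>lborel)"
    proof (intro nn_integral_mono)
      fix t
      show "indicator {0..T} t \<le> ennreal (exp (c * T * h t)) * indicator {0..T} t"
        using f_h[of t] c T by (cases "t \<in> {0..T}") auto
    qed
    finally show ?thesis .
  qed
  then have "ennreal (1/T) * ennreal (T * exp (c * (LINT t:{0..T}|lborel. f t)))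
      \<le> ennreal (1/T) * (\<integral>\<^sup>+t. ennreal (exp (c * T * h t)) * indicator {0..T} t \<partial>lborel)"
    by (rule mult_left_mono) simp
  then show ?thesis
    using T by (simp add: ennreal_mult[symmetric])
qed

lemma nn_integral_exp_time_integral_le:
  fixes f :: "real \<Rightarrow> 'a \<Rightarrow> real" and F :: "real \<times> 'a \<Rightarrow> real"
  assumes M: "sigma_finite_measure M" and T: "0 < T" and c: "0 \<le> c"
    and F: "F \<in> borel_measurable (lborel \<Otimes>\<^sub>M M)"
    and f_F: "\<And>t \<omega>. t \<in> {0..T} \<Longrightarrow> 0 \<le> f t \<omega> \<and> f t \<omega> \<le> F (t, \<omega>)"
    and K: "\<And>t. t \<in> {0..T} \<Longrightarrow> (\<integral>\<^sup>+\<omega>. ennreal (exp (c * T * F (t, \<omega>))) \<partial>M) \<le> K"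
  shows "(\<integral>\<^sup>+\<omega>. ennreal (exp (c * (LINT t:{0..T}|lborel. f t \<omega>))) \<partial>M) \<le> K"
proof -
  define G where "G p = ennreal (1/T) * ennreal (exp (c * T * F p)) * indicator {0..T} (fst p)"
    for p :: "real \<times> 'a"
  have G: "G \<in> borel_measurable (lborel \<Otimes>\<^sub>M M)"
    unfolding G_def using F by measurable
  have "(\<integral>\<^sup>+\<omega>. ennreal (exp (c * (LINT t:{0..T}|lborel. f t \<omega>))) \<partial>M) \<le> (\<integral>\<^sup>+\<omega>. (\<integral>\<^sup>+t. G (t, \<omega>) \<partial>lborel) \<partial>M)"
  proof (intro nn_integral_mono)
    fix \<omega> assume "\<omega> \<in> space M"
    have "(\<lambda>t. F (t, \<omega>)) \<in> borel_measurable lborel"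
      using measurable_compose[OF measurable_Pair2'[OF \<open>\<omega> \<in> space M\<close>] F] by simp
    from exp_set_integral_le[OF T c this f_F]
    show "ennreal (exp (c * (LINT t:{0..T}|lborel. f t \<omega>))) \<le> (\<integral>\<^sup>+t. G (t, \<omega>) \<partial>lborel)"
      unfolding G_def using measurable_compose[OF measurable_Pair2'[OF \<open>\<omega> \<in> space M\<close>] F]
      by (simp add: nn_integral_cmult mult.assoc)
  qed
  also have "\<dots> = (\<integral>\<^sup>+t. (\<integral>\<^sup>+\<omega>. G (t, \<omega>) \<partial>M) \<partial>lborel)"
    using pair_sigma_finite.Fubini[OF _ G] M
    by (simp add: pair_sigma_finite_def sigma_finite_lborel)
  also have "\<dots> \<le> (\<integral>\<^sup>+t. ennreal (1/T) * K * indicator {0..T} t \<partial>lborel)"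
  proof (intro nn_integral_mono)
    fix t
    have "(\<lambda>\<omega>. ennreal (exp (c * T * F (t, \<omega>)))) \<in> borel_measurable M"
      using measurable_compose[OF measurable_Pair1'[of t lborel M] F] by simp
    then have "(\<integral>\<^sup>+\<omega>. G (t, \<omega>) \<partial>M)
        = ennreal (1/T) * indicator {0..T} t * (\<integral>\<^sup>+\<omega>. ennreal (exp (c * T * F (t, \<omega>))) \<partial>M)"
      unfolding G_def by (simp add: nn_integral_cmult nn_integral_multc mult_ac)
    also have "\<dots> \<le> ennreal (1/T) * K * indicator {0..T} t"
      using K[of t] by (cases "t \<in> {0..T}") (auto simp: mult_left_mono)
    finally show "(\<integral>\<^sup>+\<omega>. G (t, \<omega>) \<partial>M) \<le> ennreal (1/T) * K * indicator {0..T} t" .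
  qed
  also have "\<dots> = ennreal (1/T) * K * emeasure lborel {0..T}"
    by (rule nn_integral_cmult_indicator) simp
  also have "\<dots> = ennreal (1/T) * ennreal T * K"
    using T by (simp add: mult_ac)
  also have "\<dots> = K"
    using T by (simp flip: ennreal_mult)
  finally show ?thesis .
qed

theorem mainTheorem3:
  fixes M :: "'a measure" and w :: "nat \<Rightarrow> real \<Rightarrow> 'a \<Rightarrow> real"
    and T H c :: real and N :: nat
  assumes "prob_space M"
    and "0 < T" and "1/2 < H" and "H < 1"
    and "\<And>k. is_fbm M H (w k)"
    and "prob_space.indep_vars M (\<lambda>k. Pi\<^sub>M UNIV (\<lambda>_. (borel :: real measure))) (\<lambda>k \<omega>. \<lambda>t. w k t \<omega>) UNIV"
    and "0 < c"
  shows "\<exists>\<eta>\<ge>0. (\<integral>\<^sup>+\<omega>. ennreal (exp (c * (LINT t:{0..T}|lborel.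
             (Linf_norm (OU w N \<eta> t \<omega>))\<^sup>2 + 1))) \<partial>M) < \<infinity>"
proof -
  note M = assms(1) and T = assms(2) and fbm = assms(5) and c = assms(7)
  have H: "1/2 \<le> H" using assms(3) by simp
  obtain \<eta> \<delta> where \<eta>: "0 \<le> \<eta>" and \<delta>: "0 < \<delta>"
    and small: "(2 * c * T) * (real N)\<^sup>2 * ou_var_bound H T \<eta> \<delta> \<le> 1/4"
    using ou_var_bound_small[OF H T, of "2 * c * T * (real N)\<^sup>2"] T c by auto
  define S where "S k p = stoch_int (\<lambda>s. exp (- (lam k + \<eta>) * (max 0 (fst p) - s))) (w k)
    (max 0 (fst p)) (snd p)" for k p
  define F where "F p = 1 + 2 * (\<Sum>k=1..N. \<bar>S k p\<bar>)\<^sup>2" for p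
  define K where "K = ennreal (exp (c * T))
    * (1 + of_nat N * (2 + ennreal (exp (2 * c * T * (real N)\<^sup>2 * (THE x. False)\<^sup>2))))"
  have "F \<in> borel_measurable (lborel \<Otimes>\<^sub>M M)"
    unfolding F_def S_def using fbm fbm_measurable[OF fbm]
    by (intro borel_measurable_add borel_measurable_times borel_measurable_power borel_measurable_sum
        borel_measurable_abs borel_measurable_stoch_int_exp borel_measurable_const) (auto simp: is_fbm_def)
  moreover have "0 \<le> (Linf_norm (OU w N \<eta> t \<omega>))\<^sup>2 + 1 \<and> (Linf_norm (OU w N \<eta> t \<omega>))\<^sup>2 + 1 \<le> F (t, \<omega>)"
    if "t \<in> {0..T}" for t \<omega>
    using Linf_norm_phi_sum_le[of "\<lambda>k. S k (t, \<omega>)" N] that by (simp add: OU_def[abs_def] S_def F_def)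
  moreover have "(\<integral>\<^sup>+\<omega>. ennreal (exp (c * T * F (t, \<omega>))) \<partial>M) \<le> K" if t: "t \<in> {0..T}" for t
  proof -
    have "exp (c * T * F (t, \<omega>)) = exp (c * T)
        * exp (2 * c * T * (\<Sum>k=1..N. \<bar>stoch_int (\<lambda>s. exp (- (lam k + \<eta>) * (t - s))) (w k) t \<omega>\<bar>)\<^sup>2)" for \<omega>
      using t by (simp add: F_def S_def algebra_simps flip: exp_add)
    moreover have "stoch_int (\<lambda>s. exp (- (lam k + \<eta>) * (t - s))) (w k) t \<in> borel_measurable M" for k
      using fbm_measurable[OF fbm] t by (intro borel_measurable_stoch_int) auto
    ultimately show ?thesis
      unfolding K_def using ou_coeffs_exp_square_moment[OF M fbm H _ _ \<eta> \<delta> _ small] t T c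
      by (simp add: ennreal_mult nn_integral_cmult mult_left_mono)
  qed
  ultimately have "(\<integral>\<^sup>+\<omega>. ennreal (exp (c * (LINT t:{0..T}|lborel.
      (Linf_norm (OU w N \<eta> t \<omega>))\<^sup>2 + 1))) \<partial>M) \<le> K"
    using c by (intro nn_integral_exp_time_integral_le[OF prob_space_imp_sigma_finite[OF M] T]) auto
  also have "K < \<infinity>"
    by (simp add: K_def ennreal_mult_less_top of_nat_less_top)
  finally show ?thesis
    using \<eta> by blast
qed

end
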